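(* Let $q$ be a query program and $\mathcal{T}$ a theory, and for a partial model $P$ let $\mathit{DS}_P(P,\mathcal{T})=\max_{M\in\mathit{solutions}(P',\mathcal{T}')}g_{\mathrm{witness}}(M)$ denote the domain-specific WCET estimate of $q$ for $P$ and $\mathcal{T}$. If $P\succcurlyeq Q$, then $\mathit{DS}_P(Q,\mathcal{T})\le\mathit{DS}_P(P,\mathcal{T})$. In particular, if $P=P_{\mathrm{init}}$ is the initial partial model of the metamodel $\Sigma$, then for every partial model $Q$ with $P_{\mathrm{init}}\succcurlyeq Q$, $\mathit{DS}_P(Q,\mathcal{T})\le\mathit{DS}_P(P_{\mathrm{init}},\mathcal{T})$ (the latter being the metamodel-level estimate $\mathit{DS}_\Sigma$).
   Context: Linear systems. Fix a large finite reserve $\mathcal{X}$ of integer variables. A system of linear inequalities $\mathcal{S}$ is a finite set of inequalities $\sum_j a_{ij}x_j\le y_i$ (equations are written as pairs of inequalities). A valuation $k:\mathcal{X}\to\mathbb{Z}$ is a solution of $\mathcal{S}$ ($k\vDash\mathcal{S}$) if it satisfies all of them; $\mathcal{S}_1\vDash\mathcal{S}_2$ means every solution of $\mathcal{S}_1$ is a solution of $\mathcal{S}_2$. Models. A metamodel is a signature $\Sigma$ of unary class symbols, binary relation symbols, a unary existence symbol $\varepsilon$ and a binary equality symbol $\sim$. A (scoped) partial model $P=\langle O_P,I_P,\mathcal{S}_P\rangle$ consists of a finite object set $O_P$, a 3-valued interpretation $I_P(\sigma):O_P^{\mathrm{arity}(\sigma)}\to\{0,1,\tfrac12\}$ for each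 $\sigma\in\Sigma$ ($\tfrac12$ = unknown), and a scope $\mathcal{S}_P$ (a system of linear inequalities). $P$ is concrete if all values are $0$ or $1$, $I_P(\varepsilon)(o)=1$ for all $o$, $I_P(\sim)(o_1,o_2)=1$ iff $o_1=o_2$, and $\mathcal{S}_P$ has a solution. Refinement: for $\mathit{abs}:O_Q\to O_P$, $P\succcurlyeq_{\mathit{abs}}Q$ holds if for all $\sigma$ and tuples $\bar q$, $I_P(\sigma)(\mathit{abs}(\bar q))$ is $\tfrac12$ or equals $I_Q(\sigma)(\bar q)$; every $p$ with $I_P(\varepsilon)(p)=1$ has a preimage under $\mathit{abs}$; and $\mathcal{S}_Q\vDash\mathcal{S}_P$. $P\succcurlyeq Q$ if $P\succcurlyeq_{\mathit{abs}}Q$ for some $\mathit{abs}$. The initial partial model $P_{\mathrm{init}}$ of $\Sigma$ has a single object $\mathit{new}$ with $I(C)(\mathit{new})=I(R)(\mathit{new},\mathit{new})=I(\varepsilon)(\mathit{new})=I(\sim)(\mathit{new},\mathit{new})=\tfrac12$ for all class symbols $C$ and relation symbols $R$. For a first-order predicate $\varphi$ over $\Sigma$ with free variables $v_1,\dots,v_n$ and a concrete model $M$, $M\#\varphi$ is the number of maps $Z:\{v_1,\dots,v_n\}\to O_M$ under which $\varphi$ is true in $M$. A theory $\mathcal{T}=\langle\Phi,r\rangle$ is a finite set $\Phi$ of predicates with a map $r:\Phi\to\mathcal{X}$; a concrete $M$ is compatible with it ($M\vDash\mathcal{T}$) if $\mathcal{S}_M\vDash r(\varphi)=M\#\varphi$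 for all $\varphi\in\Phi$. $\mathit{solutions}(P,\mathcal{T})$ is the set of concrete models $M$ with $P\succcurlyeq M$ and $M\vDash\mathcal{T}$. Program and IPET. $q$ is a query program generated from a graph-query search plan: structured code of nested for-loops and if-statements, where each for-loop implements an extend constraint ($C(v)$ with $v$ new, or $R(v_i,v_j)$ with $v_j$ new) and each if-statement implements a check constraint ($C(v_i)$, $R(v_i,v_j)$, $v_i=v_j$, or their negations, over bound variables). $\mathit{BB}$ is its set of basic blocks; its weighted CFG is $\langle V,E,s,t,w,\mathit{tr}\rangle$ with edges $E\subseteq V\times V$, start/end $s,t$, weights $w:E\to\mathbb{N}$, traceability $\mathit{tr}:V\to\mathit{BB}$. $f:E\to\mathcal{X}$ assigns distinct variables to edges. $\mathcal{S}_{\mathrm{IPET}}$ contains $\sum_{e=\langle s,n\rangle}f(e)=1$, $\sum_{e=\langle n,t\rangle}f(e)=1$, flow conservation at every $n\ne s,t$, $-f(e)\le0$, and possibly further low-level flow facts. $g_{\mathrm{IPET}}(k)=\sum_{e\in E}w(e)k(f(e))$. Basic block predicates. For $bb\in\mathit{BB}$, $\psi_{bb}$ is the conjunction of the atomic predicates of all for/if statements enclosing $bb$ (extend atoms without their existential quantifier; check literals as-is); $\psi_{bb}=\mathrm{true}$ if none. If $bb$ is the header of loop $\ell$, also $\psi'_{bb}=\psi_{bb}\wedge(\text{atom of }\ell)$. $\Psi$ is the set of all these predicates. Witness generation. Given a partial model $P=\langle O_P,I_P,\mathcal{S}_P\rangle$ and $\mathcal{T}=\langle\Phi,r\rangle$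 (with the range of $f$ disjoint from the range of $r$ and from the variables of the scopes), extend $r$ to $r'$ on $\Phi\cup\Psi$ by assigning to each $\psi\in\Psi$ a fresh distinct variable (not in the range of $f$ or of $r$, and not in the scopes); this choice does not depend on $P$. $\mathcal{S}_{\mathrm{merge}}$ contains for each $bb$: $r'(\psi_{bb})+r'(\psi'_{bb})-\sum_{e=\langle n_1,n_2\rangle\in E,\mathit{tr}(n_1)=bb}f(e)=0$ if $bb$ is a loop header, else $r'(\psi_{bb})-\sum_{e=\langle n_1,n_2\rangle\in E,\mathit{tr}(n_1)=bb}f(e)=0$. Set $P'=\langle O_P,I_P,\mathcal{S}_P\cup\mathcal{S}_{\mathrm{IPET}}\cup\mathcal{S}_{\mathrm{merge}}\rangle$ and $\mathcal{T}'=\langle\Phi\cup\Psi,r'\rangle$ (and analogously $Q'$ for $Q$). For a concrete $M$, $g_{\mathrm{witness}}(M)=\max_{k\vDash\mathcal{S}_M}g_{\mathrm{IPET}}(k)$. *)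

theory Defs
  imports Main "HOL-Library.FuncSet" "HOL-Library.Extended_Real"
begin

text \<open>An inequality (a, b) stands for  sum_x a x * x  <=  b.  The reserve of variables is
  a finite type 'x.\<close>
type_synonym 'x ineq = "('x \<Rightarrow> int) \<times> int"
type_synonym 'x lsys = "'x ineq set"

definition sat_ineq :: "('x::finite \<Rightarrow> int) \<Rightarrow> 'x ineq \<Rightarrow> bool" where
  "sat_ineq k i = ((\<Sum>x\<in>UNIV. fst i x * k x) \<le> snd i)"

definition sat :: "('x::finite \<Rightarrow> int) \<Rightarrow> 'x lsys \<Rightarrow> bool" where
  "sat k S = (\<forall>i\<in>S. sat_ineq k i)"

definition entails :: "'x::finite lsys \<Rightarrow> 'x lsys \<Rightarrow> bool" where
  "entails S1 S2 = (\<forall>k. sat k S1 \<longrightarrow> sat k S2)"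

definition lvars :: "'x lsys \<Rightarrow> 'x set" where
  "lvars S = {x. \<exists>i\<in>S. fst i x \<noteq> 0}"

definition eqn :: "('x \<Rightarrow> int) \<Rightarrow> int \<Rightarrow> 'x lsys" where
  "eqn a c = {(a, c), (\<lambda>x. - a x, - c)}"

definition ind :: "'x \<Rightarrow> 'x \<Rightarrow> int" where
  "ind y x = (if x = y then 1 else 0)"

datatype tv = Zero | One | Half

record ('o, 'c, 'r, 'x) pmodel =
  objs :: "'o set"
  Icls :: "'c \<Rightarrow> 'o \<Rightarrow> tv"
  Irel :: "'r \<Rightarrow> 'o \<Rightarrow> 'o \<Rightarrow> tv"
  Iex  :: "'o \<Rightarrow> tv"
  Isim :: "'o \<Rightarrow> 'o \<Rightarrow> tv"
  scope :: "'x lsys"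

definition wf_pmodel :: "('o, 'c, 'r, 'x) pmodel \<Rightarrow> bool" where
  "wf_pmodel P = (finite (objs P) \<and> finite (scope P))"

definition concrete :: "('o, 'c, 'r, 'x::finite) pmodel \<Rightarrow> bool" where
  "concrete M =
    ((\<forall>c. \<forall>ob\<in>objs M. Icls M c ob \<noteq> Half) \<and>
     (\<forall>r. \<forall>o1\<in>objs M. \<forall>o2\<in>objs M. Irel M r o1 o2 \<noteq> Half) \<and>
     (\<forall>ob\<in>objs M. Iex M ob = One) \<and>
     (\<forall>o1\<in>objs M. \<forall>o2\<in>objs M. Isim M o1 o2 = (if o1 = o2 then One else Zero)) \<and>
     (\<exists>k. sat k (scope M)))"

definition refines_abs :: "('p, 'c, 'r, 'x::finite) pmodel \<Rightarrow> ('q, 'c, 'r, 'x) pmodel \<Rightarrow> ('q \<Rightarrow> 'p) \<Rightarrow> bool" where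
  "refines_abs P Q ab =
    (ab ` objs Q \<subseteq> objs P \<and>
     (\<forall>c. \<forall>q\<in>objs Q. Icls P c (ab q) = Half \<or> Icls P c (ab q) = Icls Q c q) \<and>
     (\<forall>r. \<forall>q1\<in>objs Q. \<forall>q2\<in>objs Q.
        Irel P r (ab q1) (ab q2) = Half \<or> Irel P r (ab q1) (ab q2) = Irel Q r q1 q2) \<and>
     (\<forall>q\<in>objs Q. Iex P (ab q) = Half \<or> Iex P (ab q) = Iex Q q) \<and>
     (\<forall>q1\<in>objs Q. \<forall>q2\<in>objs Q.
        Isim P (ab q1) (ab q2) = Half \<or> Isim P (ab q1) (ab q2) = Isim Q q1 q2) \<and>
     (\<forall>p\<in>objs P. Iex P p = One \<longrightarrow> (\<exists>q\<in>objs Q. ab q = p)) \<and>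
     entails (scope Q) (scope P))"

definition refines :: "('p, 'c, 'r, 'x::finite) pmodel \<Rightarrow> ('q, 'c, 'r, 'x) pmodel \<Rightarrow> bool"
  (infix "\<succeq>\<^sub>P" 50) where
  "P \<succeq>\<^sub>P Q = (\<exists>ab. refines_abs P Q ab)"

definition Pinit :: "(unit, 'c, 'r, 'x) pmodel" where
  "Pinit = \<lparr>objs = {()}, Icls = (\<lambda>_ _. Half), Irel = (\<lambda>_ _ _. Half),
            Iex = (\<lambda>_. Half), Isim = (\<lambda>_ _. Half), scope = {}\<rparr>"

datatype ('c, 'r) fo =
    FCls 'c nat | FRel 'r nat nat | FEx nat | FSim nat nat | FEq nat nat
  | FTrue | FNot "('c, 'r) fo" | FAnd "('c, 'r) fo" "('c, 'r) fo" | FOr "('c, 'r) fo" "('c, 'r) fo"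
  | FExists nat "('c, 'r) fo" | FAll nat "('c, 'r) fo"

fun fv :: "('c, 'r) fo \<Rightarrow> nat set" where
  "fv (FCls c v) = {v}"
| "fv (FRel r v w) = {v, w}"
| "fv (FEx v) = {v}"
| "fv (FSim v w) = {v, w}"
| "fv (FEq v w) = {v, w}"
| "fv FTrue = {}"
| "fv (FNot p) = fv p"
| "fv (FAnd p q) = fv p \<union> fv q"
| "fv (FOr p q) = fv p \<union> fv q"
| "fv (FExists v p) = fv p - {v}"
| "fv (FAll v p) = fv p - {v}"

fun eval :: "('o, 'c, 'r, 'x) pmodel \<Rightarrow> (nat \<Rightarrow> 'o) \<Rightarrow> ('c, 'r) fo \<Rightarrow> bool" where
  "eval M Z (FCls c v) = (Icls M c (Z v) = One)"
| "eval M Z (FRel r v w) = (Irel M r (Z v) (Z w) = One)"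
| "eval M Z (FEx v) = (Iex M (Z v) = One)"
| "eval M Z (FSim v w) = (Isim M (Z v) (Z w) = One)"
| "eval M Z (FEq v w) = (Z v = Z w)"
| "eval M Z FTrue = True"
| "eval M Z (FNot p) = (\<not> eval M Z p)"
| "eval M Z (FAnd p q) = (eval M Z p \<and> eval M Z q)"
| "eval M Z (FOr p q) = (eval M Z p \<or> eval M Z q)"
| "eval M Z (FExists v p) = (\<exists>ob\<in>objs M. eval M (Z(v := ob)) p)"
| "eval M Z (FAll v p) = (\<forall>ob\<in>objs M. eval M (Z(v := ob)) p)"

definition count :: "('o, 'c, 'r, 'x) pmodel \<Rightarrow> ('c, 'r) fo \<Rightarrow> nat" where
  "count M p = card {Z \<in> fv p \<rightarrow>\<^sub>E objs M. eval M (\<lambda>v. Z v) p}"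

definition compat :: "('o, 'c, 'r, 'x::finite) pmodel \<Rightarrow> ('c, 'r) fo set \<Rightarrow> (('c, 'r) fo \<Rightarrow> 'x) \<Rightarrow> bool" where
  "compat M Phi r = (\<forall>p\<in>Phi. entails (scope M) (eqn (ind (r p)) (int (count M p))))"

text \<open>Solutions: concrete models (object type nat, which represents arbitrary finite object sets).\<close>
definition solutions :: "('p, 'c, 'r, 'x::finite) pmodel \<Rightarrow> ('c, 'r) fo set \<Rightarrow> (('c, 'r) fo \<Rightarrow> 'x)
    \<Rightarrow> (nat, 'c, 'r, 'x) pmodel set" where
  "solutions P Phi r = {M. wf_pmodel M \<and> concrete M \<and> P \<succeq>\<^sub>P M \<and> compat M Phi r}"

datatype ('c, 'r) ext = ExtCls 'c nat | ExtRel 'r nat nat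
datatype ('c, 'r) chk = ChkCls 'c nat | ChkRel 'r nat nat | ChkEq nat nat

text \<open>Structured code: a for-loop carries its header basic block and its extend constraint;
  an if-statement carries a polarity (False = negated) and its check constraint;
  Block b is a basic block b.\<close>
datatype ('c, 'r, 'bb) stmt =
    For 'bb "('c, 'r) ext" "('c, 'r, 'bb) stmt list"
  | If bool "('c, 'r) chk" "('c, 'r, 'bb) stmt list"
  | Block 'bb

fun ext_fo :: "('c, 'r) ext \<Rightarrow> ('c, 'r) fo" where
  "ext_fo (ExtCls c v) = FCls c v"
| "ext_fo (ExtRel r v w) = FRel r v w"

fun chk_fo :: "('c, 'r) chk \<Rightarrow> ('c, 'r) fo" where
  "chk_fo (ChkCls c v) = FCls c v"
| "chk_fo (ChkRel r v w) = FRel r v w"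
| "chk_fo (ChkEq v w) = FEq v w"

definition lit_fo :: "bool \<Rightarrow> ('c, 'r) chk \<Rightarrow> ('c, 'r) fo" where
  "lit_fo pos c = (if pos then chk_fo c else FNot (chk_fo c))"

fun conj :: "('c, 'r) fo list \<Rightarrow> ('c, 'r) fo" where
  "conj [] = FTrue"
| "conj [a] = a"
| "conj (a # as) = FAnd a (conj as)"

text \<open>For each basic block: enclosing atoms and (if it is a loop header) the atom of the loop.\<close>
fun bbinfo :: "('c, 'r) fo list \<Rightarrow> ('c, 'r, 'bb) stmt
    \<Rightarrow> ('bb \<times> ('c, 'r) fo list \<times> ('c, 'r) fo option) list" where
  "bbinfo ctx (Block b) = [(b, ctx, None)]"
| "bbinfo ctx (For b a body) =
     (b, ctx, Some (ext_fo a)) # concat (map (bbinfo (ctx @ [ext_fo a])) body)"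
| "bbinfo ctx (If pos c body) = concat (map (bbinfo (ctx @ [lit_fo pos c])) body)"

definition prog_info :: "('c, 'r, 'bb) stmt list \<Rightarrow> ('bb \<times> ('c, 'r) fo list \<times> ('c, 'r) fo option) list" where
  "prog_info q = concat (map (bbinfo []) q)"

definition BBs :: "('c, 'r, 'bb) stmt list \<Rightarrow> 'bb set" where
  "BBs q = fst ` set (prog_info q)"

definition wf_prog :: "('c, 'r, 'bb) stmt list \<Rightarrow> bool" where
  "wf_prog q = distinct (map fst (prog_info q))"

definition psi :: "('c, 'r, 'bb) stmt list \<Rightarrow> 'bb \<Rightarrow> ('c, 'r) fo" where
  "psi q b = conj (fst (the (map_of (prog_info q) b)))"

definition hdr :: "('c, 'r, 'bb) stmt list \<Rightarrow> 'bb \<Rightarrow> ('c, 'r) fo option" where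
  "hdr q b = snd (the (map_of (prog_info q) b))"

definition psi' :: "('c, 'r, 'bb) stmt list \<Rightarrow> 'bb \<Rightarrow> ('c, 'r) fo" where
  "psi' q b = FAnd (psi q b) (the (hdr q b))"

definition Psi :: "('c, 'r, 'bb) stmt list \<Rightarrow> ('c, 'r) fo set" where
  "Psi q = psi q ` BBs q \<union> psi' q ` {b \<in> BBs q. hdr q b \<noteq> None}"

record ('n, 'bb) wcfg =
  V :: "'n set"
  E :: "('n \<times> 'n) set"
  s :: 'n
  t :: 'n
  w :: "'n \<times> 'n \<Rightarrow> nat"
  tr :: "'n \<Rightarrow> 'bb"

definition wf_cfg :: "('c, 'r, 'bb) stmt list \<Rightarrow> ('n, 'bb) wcfg \<Rightarrow> ('n \<times> 'n \<Rightarrow> 'x) \<Rightarrow> bool" where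
  "wf_cfg q G f = (finite (V G) \<and> E G \<subseteq> V G \<times> V G \<and> s G \<in> V G \<and> t G \<in> V G \<and>
                   tr G ` V G \<subseteq> BBs q \<and> inj_on f (E G))"

definition ecoef :: "('n \<times> 'n \<Rightarrow> 'x) \<Rightarrow> ('n \<times> 'n) set \<Rightarrow> 'x \<Rightarrow> int" where
  "ecoef f A x = int (card {e \<in> A. f e = x})"

text \<open>S_IPET; ff are the (arbitrary) further low-level flow facts.\<close>
definition S_ipet :: "('n, 'bb) wcfg \<Rightarrow> ('n \<times> 'n \<Rightarrow> 'x) \<Rightarrow> 'x lsys \<Rightarrow> 'x lsys" where
  "S_ipet G f ff =
     eqn (ecoef f {e \<in> E G. fst e = s G}) 1 \<union>
     eqn (ecoef f {e \<in> E G. snd e = t G}) 1 \<union>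
     (\<Union>n\<in>V G - {s G, t G}. eqn (\<lambda>x. ecoef f {e \<in> E G. snd e = n} x - ecoef f {e \<in> E G. fst e = n} x) 0) \<union>
     (\<lambda>e. (\<lambda>x. - ind (f e) x, 0)) ` E G \<union>
     ff"

definition g_ipet :: "('n, 'bb) wcfg \<Rightarrow> ('n \<times> 'n \<Rightarrow> 'x) \<Rightarrow> ('x \<Rightarrow> int) \<Rightarrow> int" where
  "g_ipet G f k = (\<Sum>e\<in>E G. int (w G e) * k (f e))"

definition S_merge :: "('c, 'r, 'bb) stmt list \<Rightarrow> ('n, 'bb) wcfg \<Rightarrow> ('n \<times> 'n \<Rightarrow> 'x)
    \<Rightarrow> (('c, 'r) fo \<Rightarrow> 'x) \<Rightarrow> 'x lsys" where
  "S_merge q G f r' =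
     (\<Union>b\<in>BBs q. eqn (\<lambda>x. ind (r' (psi q b)) x
                         + (if hdr q b \<noteq> None then ind (r' (psi' q b)) x else 0)
                         - ecoef f {e \<in> E G. tr G (fst e) = b} x) 0)"

definition extend_pm :: "('c, 'r, 'bb) stmt list \<Rightarrow> ('n, 'bb) wcfg \<Rightarrow> ('n \<times> 'n \<Rightarrow> 'x) \<Rightarrow> 'x lsys
    \<Rightarrow> (('c, 'r) fo \<Rightarrow> 'x) \<Rightarrow> ('p, 'c, 'r, 'x) pmodel \<Rightarrow> ('p, 'c, 'r, 'x) pmodel" where
  "extend_pm q G f ff r' P = P\<lparr>scope := scope P \<union> S_ipet G f ff \<union> S_merge q G f r'\<rparr>"

text \<open>g_witness(M) = max over solutions k of S_M of g_IPET(k) (as a supremum in the extended reals).\<close>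
definition g_witness :: "('n, 'bb) wcfg \<Rightarrow> ('n \<times> 'n \<Rightarrow> 'x::finite) \<Rightarrow> ('o, 'c, 'r, 'x) pmodel \<Rightarrow> ereal" where
  "g_witness G f M = (SUP k \<in> {k. sat k (scope M)}. ereal (real_of_int (g_ipet G f k)))"

text \<open>Domain-specific WCET estimate DS_P(P, T) for theory T = (Phi, r) and extension r'.\<close>
definition DS :: "('c, 'r, 'bb) stmt list \<Rightarrow> ('n, 'bb) wcfg \<Rightarrow> ('n \<times> 'n \<Rightarrow> 'x::finite) \<Rightarrow> 'x lsys
    \<Rightarrow> ('c, 'r) fo set \<Rightarrow> (('c, 'r) fo \<Rightarrow> 'x) \<Rightarrow> ('p, 'c, 'r, 'x) pmodel \<Rightarrow> ereal" where
  "DS q G f ff Phi r' P =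
     (SUP M \<in> solutions (extend_pm q G f ff r' P) (Phi \<union> Psi q) r'. g_witness G f M)"

end

theory Submission
  imports Defs
begin

text \<open>Refinement is transitive, and adding the same IPET and merge constraints to the scopes of
  both sides preserves it. Hence P \<succeq> Q makes every solution of Q' a solution of P', and DS,
  a supremum of witness values over these solutions, is antitone in the partial model.\<close>

lemma Half_or_eq_trans:
  "x = Half \<or> x = y \<Longrightarrow> y = Half \<or> y = z \<Longrightarrow> x = Half \<or> x = z"
  by auto

lemma entails_trans: "entails S1 S2 \<Longrightarrow> entails S2 S3 \<Longrightarrow> entails S1 S3"
  unfolding entails_def by blast

lemma refines_abs_comp_covers_existing:
  assumes PQ: "refines_abs P Q a" and QM: "refines_abs Q M b"
    and p: "p \<in> objs P" and p_exists: "Iex P p = One"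
  shows "\<exists>m\<in>objs M. a (b m) = p"
proof -
  have "\<forall>p\<in>objs P. Iex P p = One \<longrightarrow> (\<exists>q\<in>objs Q. a q = p)"
    using PQ by (simp add: refines_abs_def)
  with p p_exists obtain q where q: "q \<in> objs Q" "a q = p"
    by blast
  have "Iex P (a q) = Half \<or> Iex P (a q) = Iex Q q"
    using PQ q(1) by (simp add: refines_abs_def)
  with q p_exists have "Iex Q q = One"
    by auto
  moreover have "\<forall>q\<in>objs Q. Iex Q q = One \<longrightarrow> (\<exists>m\<in>objs M. b m = q)"
    using QM by (simp add: refines_abs_def)
  ultimately obtain m where "m \<in> objs M" "b m = q"
    using q(1) by blast
  with q show ?thesis
    by blast
qed

lemma refines_abs_trans:
  assumes PQ: "refines_abs P Q a" and QM: "refines_abs Q M b"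
  shows "refines_abs P M (a \<circ> b)"
proof -
  have b_into: "b m \<in> objs Q" if "m \<in> objs M" for m
    using QM that by (simp add: refines_abs_def image_subset_iff)
  show ?thesis
    unfolding refines_abs_def comp_def
  proof (intro conjI allI ballI impI)
    show "(\<lambda>m. a (b m)) ` objs M \<subseteq> objs P"
      using PQ b_into by (auto simp: refines_abs_def)
  next
    fix c m assume m: "m \<in> objs M"
    have "Icls P c (a (b m)) = Half \<or> Icls P c (a (b m)) = Icls Q c (b m)"
      using PQ b_into[OF m] by (simp add: refines_abs_def)
    moreover have "Icls Q c (b m) = Half \<or> Icls Q c (b m) = Icls M c m"
      using QM m by (simp add: refines_abs_def)
    ultimately show "Icls P c (a (b m)) = Half \<or> Icls P c (a (b m)) = Icls M c m"
      by (rule Half_or_eq_trans)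
  next
    fix R m1 m2 assume m1: "m1 \<in> objs M" and m2: "m2 \<in> objs M"
    have "Irel P R (a (b m1)) (a (b m2)) = Half \<or>
        Irel P R (a (b m1)) (a (b m2)) = Irel Q R (b m1) (b m2)"
      using PQ b_into[OF m1] b_into[OF m2] by (simp add: refines_abs_def)
    moreover have "Irel Q R (b m1) (b m2) = Half \<or> Irel Q R (b m1) (b m2) = Irel M R m1 m2"
      using QM m1 m2 by (simp add: refines_abs_def)
    ultimately show "Irel P R (a (b m1)) (a (b m2)) = Half \<or>
        Irel P R (a (b m1)) (a (b m2)) = Irel M R m1 m2"
      by (rule Half_or_eq_trans)
  next
    fix m assume m: "m \<in> objs M"
    have "Iex P (a (b m)) = Half \<or> Iex P (a (b m)) = Iex Q (b m)"
      using PQ b_into[OF m] by (simp add: refines_abs_def)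
    moreover have "Iex Q (b m) = Half \<or> Iex Q (b m) = Iex M m"
      using QM m by (simp add: refines_abs_def)
    ultimately show "Iex P (a (b m)) = Half \<or> Iex P (a (b m)) = Iex M m"
      by (rule Half_or_eq_trans)
  next
    fix m1 m2 assume m1: "m1 \<in> objs M" and m2: "m2 \<in> objs M"
    have "Isim P (a (b m1)) (a (b m2)) = Half \<or>
        Isim P (a (b m1)) (a (b m2)) = Isim Q (b m1) (b m2)"
      using PQ b_into[OF m1] b_into[OF m2] by (simp add: refines_abs_def)
    moreover have "Isim Q (b m1) (b m2) = Half \<or> Isim Q (b m1) (b m2) = Isim M m1 m2"
      using QM m1 m2 by (simp add: refines_abs_def)
    ultimately show "Isim P (a (b m1)) (a (b m2)) = Half \<or>
        Isim P (a (b m1)) (a (b m2)) = Isim M m1 m2"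
      by (rule Half_or_eq_trans)
  next
    fix p assume "p \<in> objs P" "Iex P p = One"
    with PQ QM show "\<exists>m\<in>objs M. a (b m) = p"
      by (rule refines_abs_comp_covers_existing)
  next
    show "entails (scope M) (scope P)"
      using PQ QM by (auto simp: refines_abs_def intro: entails_trans)
  qed
qed

lemma refines_trans: "P \<succeq>\<^sub>P Q \<Longrightarrow> Q \<succeq>\<^sub>P M \<Longrightarrow> P \<succeq>\<^sub>P M"
  unfolding refines_def by (blast intro: refines_abs_trans)

lemma refines_abs_add_scope:
  assumes "refines_abs P Q a"
  shows "refines_abs (P\<lparr>scope := scope P \<union> X\<rparr>) (Q\<lparr>scope := scope Q \<union> X\<rparr>) a"
  using assms unfolding refines_abs_def entails_def sat_def by auto

lemma extend_pm_refines:
  "P \<succeq>\<^sub>P Q \<Longrightarrow> extend_pm q G f ff r' P \<succeq>\<^sub>P extend_pm q G f ff r' Q"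
  unfolding refines_def extend_pm_def Un_assoc by (blast intro: refines_abs_add_scope)

lemma solutions_antimono: "P \<succeq>\<^sub>P Q \<Longrightarrow> solutions Q Phi r \<subseteq> solutions P Phi r"
  unfolding solutions_def by (blast intro: refines_trans)

lemma DS_antimono:
  assumes "P \<succeq>\<^sub>P Q"
  shows "DS q G f ff Phi r' Q \<le> DS q G f ff Phi r' P"
  unfolding DS_def
  by (rule SUP_subset_mono[OF solutions_antimono[OF extend_pm_refines[OF assms]] order_refl])

theorem proposition5p6:
  fixes q :: "('c, 'r, 'bb) stmt list"
    and G :: "('n, 'bb) wcfg"
    and f :: "'n \<times> 'n \<Rightarrow> 'x::finite"
    and ff :: "'x lsys"
    and Phi :: "('c, 'r) fo set"
    and r r' :: "('c, 'r) fo \<Rightarrow> 'x"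
    and P :: "('p, 'c, 'r, 'x) pmodel"
    and Q :: "('q, 'c, 'r, 'x) pmodel"
  assumes "wf_prog q"
    and "wf_cfg q G f"
    and "finite Phi"
    and "wf_pmodel P" and "wf_pmodel Q"
    and "f ` E G \<inter> r ` Phi = {}"
    and "f ` E G \<inter> (lvars (scope P) \<union> lvars (scope Q)) = {}"
    and "\<forall>p\<in>Phi. r' p = r p"
    and "inj_on r' (Psi q - Phi)"
    and "r' ` (Psi q - Phi) \<inter> (f ` E G \<union> r ` Phi \<union> lvars (scope P) \<union> lvars (scope Q)) = {}"
  shows "(P \<succeq>\<^sub>P Q \<longrightarrow> DS q G f ff Phi r' Q \<le> DS q G f ff Phi r' P) \<and>
         (Pinit \<succeq>\<^sub>P Q \<longrightarrow> DS q G f ff Phi r' Q \<le> DS q G f ff Phi r' Pinit)"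
  by (simp add: DS_antimono)

end
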